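(* Let $F$ be an infinite field, $n\ge2$, and $g\in\mathbb{Z}_n\setminus\{0\}$. Let $\mathcal{B}_g=\{[z,a_1y_1,\dots,a_my_m]\mid m\ge1,\ a_i>0\}$ where $z$ is a fixed variable of degree $g$. Then: (i) if $f,h\in\mathcal{B}_g$ and $V_f\le V_h$, then $h\in\langle\{f\}\cup I\rangle_{T_{\mathbb{Z}_n}}$; (ii) $(\mathcal{B}_g,\le_{\mathcal{B}_g})$ has the finite basis property; (iii) for every $T_{\mathbb{Z}_n}$-ideal $J\supseteq I$, with $\mathcal{A}_g=J\cap\mathcal{B}_g$, there is a finite subset $\mathcal{A}'_g\subseteq\mathcal{A}_g$ with $\langle\mathcal{A}_g\cup I\rangle_{T_{\mathbb{Z}_n}}=\langle\mathcal{A}'_g\cup I\rangle_{T_{\mathbb{Z}_n}}$.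
   Context: $UT_n(F)^{(-)}$: $n\times n$ upper triangular matrices with bracket $[a,b]=ab-ba$ and canonical $\mathbb{Z}_n$-grading (degree-$k$ component spanned by $e_{ij}$ with $j-i=k$). $\mathcal{L}_{\mathbb{Z}_n}$ is the free Lie algebra on variables $y_1,y_2,\dots$ of degree $0$ and $z^{g}_1,z^g_2,\dots$ of degree $g$ for each $g\ne0$; $I$ is the $T_{\mathbb{Z}_n}$-ideal of graded identities of $UT_n(F)^{(-)}$; $\langle S\rangle_{T_{\mathbb{Z}_n}}$ is the smallest graded ideal containing $S$ invariant under degree-preserving endomorphisms. Commutators are left normed; $[z,a_1y_1,\dots,a_my_m]$ has $y_i$ repeated $a_i$ times. $V_f=(a_1,\dots,a_m)$, and $(a_1,\dots,a_m)\le(a'_1,\dots,a'_r)$ iff there is a strictly increasing $\varphi:\{1,\dots,m\}\to\{1,\dots,r\}$ with $a_i\le a'_{\varphi(i)}$; $f\le_{\mathcal{B}_g}h$ iff $V_f\le V_h$. Finite basis property: every infinite sequence has an infinite non-decreasing subsequence. *)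

theory Defs
  imports Main
begin

text \<open>Variables of the free graded Lie algebra: a pair (d, i) is the i-th variable
of Z_n-degree d (only d < n is used).  So y_i = (0, i) and z^g_i = (g, i), g \<noteq> 0.
The free Lie algebra is realised (Poincare-Birkhoff-Witt / Witt) as the Lie subalgebra
generated by the variables inside the free associative algebra F<X>, whose elements
are functions from words to F (with finite support).\<close>

type_synonym var = "nat \<times> nat"
type_synonym 'f ncpoly = "var list \<Rightarrow> 'f"

definition nc_one :: "'f::field ncpoly" where
  "nc_one w = (if w = [] then 1 else 0)"

definition nc_var :: "var \<Rightarrow> 'f::field ncpoly" where
  "nc_var x w = (if w = [x] then 1 else 0)"

definition nc_mult :: "'f::field ncpoly \<Rightarrow> 'f ncpoly \<Rightarrow> 'f ncpoly" where
  "nc_mult p q w = (\<Sum>i\<le>length w. p (take i w) * q (drop i w))"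

definition nc_br :: "'f::field ncpoly \<Rightarrow> 'f ncpoly \<Rightarrow> 'f ncpoly" where
  "nc_br p q = (\<lambda>w. nc_mult p q w - nc_mult q p w)"

inductive_set free_lie :: "nat \<Rightarrow> 'f::field ncpoly set" for n :: nat where
  var: "d < n \<Longrightarrow> nc_var (d, i) \<in> free_lie n"
| add: "p \<in> free_lie n \<Longrightarrow> q \<in> free_lie n \<Longrightarrow> (\<lambda>w. p w + q w) \<in> free_lie n"
| smult: "p \<in> free_lie n \<Longrightarrow> (\<lambda>w. c * p w) \<in> free_lie n"
| br: "p \<in> free_lie n \<Longrightarrow> q \<in> free_lie n \<Longrightarrow> nc_br p q \<in> free_lie n"

definition word_deg :: "nat \<Rightarrow> var list \<Rightarrow> nat" where
  "word_deg n w = (\<Sum>x\<leftarrow>w. fst x) mod n"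

definition homog :: "nat \<Rightarrow> nat \<Rightarrow> 'f::field ncpoly \<Rightarrow> bool" where
  "homog n d p \<longleftrightarrow> (\<forall>w. p w \<noteq> 0 \<longrightarrow> word_deg n w = d)"

definition hcomp :: "nat \<Rightarrow> nat \<Rightarrow> 'f::field ncpoly \<Rightarrow> 'f ncpoly" where
  "hcomp n d p w = (if word_deg n w = d then p w else 0)"

definition word_img :: "(var \<Rightarrow> 'f::field ncpoly) \<Rightarrow> var list \<Rightarrow> 'f ncpoly" where
  "word_img \<sigma> w = foldr (\<lambda>x acc. nc_mult (\<sigma> x) acc) w nc_one"

definition subst :: "(var \<Rightarrow> 'f::field ncpoly) \<Rightarrow> 'f ncpoly \<Rightarrow> 'f ncpoly" where
  "subst \<sigma> p u = (\<Sum>w\<in>{w. p w \<noteq> 0}. p w * word_img \<sigma> w u)"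

definition graded_endo :: "nat \<Rightarrow> (var \<Rightarrow> 'f::field ncpoly) \<Rightarrow> bool" where
  "graded_endo n \<sigma> \<longleftrightarrow> (\<forall>d i. d < n \<longrightarrow> \<sigma> (d, i) \<in> free_lie n \<and> homog n d (\<sigma> (d, i)))"

definition T_ideal :: "nat \<Rightarrow> 'f::field ncpoly set \<Rightarrow> bool" where
  "T_ideal n J \<longleftrightarrow> J \<subseteq> free_lie n \<and> (\<lambda>w. 0) \<in> J
     \<and> (\<forall>p\<in>J. \<forall>q\<in>J. (\<lambda>w. p w + q w) \<in> J)
     \<and> (\<forall>p\<in>J. \<forall>c. (\<lambda>w. c * p w) \<in> J)
     \<and> (\<forall>p\<in>J. \<forall>q\<in>free_lie n. nc_br p q \<in> J)
     \<and> (\<forall>p\<in>J. \<forall>d<n. hcomp n d p \<in> J)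
     \<and> (\<forall>p\<in>J. \<forall>\<sigma>. graded_endo n \<sigma> \<longrightarrow> subst \<sigma> p \<in> J)"

definition T_gen :: "nat \<Rightarrow> 'f::field ncpoly set \<Rightarrow> 'f ncpoly set" where
  "T_gen n S = \<Inter>{J. T_ideal n J \<and> S \<subseteq> J}"

definition mmult :: "nat \<Rightarrow> (nat \<Rightarrow> nat \<Rightarrow> 'f::field) \<Rightarrow> (nat \<Rightarrow> nat \<Rightarrow> 'f) \<Rightarrow> nat \<Rightarrow> nat \<Rightarrow> 'f" where
  "mmult n A B i j = (\<Sum>k<n. A i k * B k j)"

fun mprod :: "nat \<Rightarrow> (nat \<Rightarrow> nat \<Rightarrow> 'f::field) list \<Rightarrow> nat \<Rightarrow> nat \<Rightarrow> 'f" where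
  "mprod n [] = (\<lambda>i j. if i = j then 1 else 0)"
| "mprod n (A # As) = mmult n A (mprod n As)"

text \<open>Homogeneous element of degree d of UT_n with its canonical Z_n-grading:
in the span of the e_ij with j - i = d.\<close>
definition ut_homog :: "nat \<Rightarrow> nat \<Rightarrow> (nat \<Rightarrow> nat \<Rightarrow> 'f::field) \<Rightarrow> bool" where
  "ut_homog n d A \<longleftrightarrow> (\<forall>a<n. \<forall>b<n. A a b \<noteq> 0 \<longrightarrow> b = a + d)"

definition graded_eval_map :: "nat \<Rightarrow> (var \<Rightarrow> nat \<Rightarrow> nat \<Rightarrow> 'f::field) \<Rightarrow> bool" where
  "graded_eval_map n \<phi> \<longleftrightarrow> (\<forall>d i. d < n \<longrightarrow> ut_homog n d (\<phi> (d, i)))"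

text \<open>Evaluation in UT_n (the Lie bracket of UT_n^(-) is ab - ba, so evaluating the
associative image of a Lie polynomial gives its Lie evaluation).\<close>
definition ut_eval :: "nat \<Rightarrow> (var \<Rightarrow> nat \<Rightarrow> nat \<Rightarrow> 'f::field) \<Rightarrow> 'f ncpoly \<Rightarrow> nat \<Rightarrow> nat \<Rightarrow> 'f" where
  "ut_eval n \<phi> p a b = (\<Sum>w\<in>{w. p w \<noteq> 0}. p w * mprod n (map \<phi> w) a b)"

definition UT_ids :: "nat \<Rightarrow> 'f::field ncpoly set" where
  "UT_ids n = {p \<in> free_lie n. \<forall>\<phi>. graded_eval_map n \<phi> \<longrightarrow>
                 (\<forall>a<n. \<forall>b<n. ut_eval n \<phi> p a b = 0)}"

text \<open>Left-normed commutator [z, a_1 y_1, ..., a_m y_m], with y_i = (0, i) and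
the exponent vector given as the list [a_1, ..., a_m].\<close>
definition lnc :: "var \<Rightarrow> nat list \<Rightarrow> 'f::field ncpoly" where
  "lnc z as = foldl (\<lambda>p y. nc_br p (nc_var y)) (nc_var z)
     (concat (map (\<lambda>i. replicate (as ! i) (0, Suc i)) [0..<length as]))"

definition valid_exp :: "nat list \<Rightarrow> bool" where
  "valid_exp as \<longleftrightarrow> as \<noteq> [] \<and> (\<forall>a\<in>set as. 0 < a)"

definition B_set :: "var \<Rightarrow> 'f::field ncpoly set" where
  "B_set z = {lnc z as | as. valid_exp as}"

definition vle :: "nat list \<Rightarrow> nat list \<Rightarrow> bool" where
  "vle as bs \<longleftrightarrow> (\<exists>\<phi>. strict_mono_on {0..<length as} \<phi> \<and>
      (\<forall>i<length as. \<phi> i < length bs \<and> as ! i \<le> bs ! (\<phi> i)))"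

end

theory Submission
  imports Defs "HOL-Library.Multiset" "HOL-Library.Sublist" "HOL-Library.Ramsey"
begin

text \<open>If \<open>\<phi>\<close> witnesses \<open>(a\<^sub>1, \<dots>, a\<^sub>m) \<le> (b\<^sub>1, \<dots>, b\<^sub>r)\<close>, the graded
  substitution \<open>y\<^sub>i \<mapsto> y\<^bsub>\<phi> i\<^esub>\<close> maps \<open>[z, a\<^sub>1 y\<^sub>1, \<dots>, a\<^sub>m y\<^sub>m]\<close> to a left-normed
  commutator whose \<open>y\<close>-letters are a sub-multiset of those of \<open>[z, b\<^sub>1 y\<^sub>1, \<dots>, b\<^sub>r y\<^sub>r]\<close>.
  Bracketing with the missing letters gives the latter up to the order of the \<open>y\<close>'s, and that
  order is irrelevant modulo \<open>I\<close>: degree-0 elements of \<open>UT\<^sub>n\<close> are diagonal, so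
  \<open>[y\<^sub>i, y\<^sub>j] \<in> I\<close>, and by Jacobi adjacent \<open>y\<close>'s may be swapped. This is (i).
  The order on exponent vectors contains the embedding order on lists of naturals, which is a
  well-quasi-order by Higman's lemma (Nash-Williams' minimal bad sequence argument); Ramsey's
  theorem then yields (ii), and a finite basis of the exponent vectors occurring in \<open>J\<close>
  together with (i) yields (iii).\<close>

section \<open>The free associative algebra\<close>

definition nc_monom :: "var list \<Rightarrow> 'f::field ncpoly" where
  "nc_monom u w = (if w = u then 1 else 0)"

lemma nc_var_eq_monom: "nc_var x = nc_monom [x]"
  by (auto simp: nc_var_def nc_monom_def)

lemma nc_one_eq_monom: "nc_one = nc_monom []"
  by (auto simp: nc_one_def nc_monom_def)

definition splittings :: "'a list \<Rightarrow> ('a list \<times> 'a list) set" where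
  "splittings w = {(u, v). u @ v = w}"

lemma splittings_eq_image: "splittings w = (\<lambda>i. (take i w, drop i w)) ` {..length w}"
proof (intro equalityI subsetI)
  fix s assume "s \<in> splittings w"
  then obtain u v where "s = (u, v)" "w = u @ v" by (auto simp: splittings_def)
  then show "s \<in> (\<lambda>i. (take i w, drop i w)) ` {..length w}"
    by (intro image_eqI[of _ _ "length u"]) auto
qed (auto simp: splittings_def)

lemma finite_splittings [simp]: "finite (splittings w)"
  by (simp add: splittings_eq_image)

lemma nc_mult_splittings: "nc_mult p q w = (\<Sum>(u, v)\<in>splittings w. p u * q v)"
  unfolding nc_mult_def splittings_def
  by (rule sum.reindex_bij_witness[where i = "\<lambda>(u, v). length u" and j = "\<lambda>i. (take i w, drop i w)"])
     auto

lemma nc_mult_monom: "nc_mult (nc_monom u) (nc_monom v) = (nc_monom (u @ v) :: 'f::field ncpoly)"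
proof
  fix w
  have "nc_mult (nc_monom u) (nc_monom v) w = (\<Sum>s\<in>splittings w. if s = (u, v) then 1 else 0 :: 'f)"
    unfolding nc_mult_splittings by (intro sum.cong) (auto simp: nc_monom_def split: if_splits)
  then show "nc_mult (nc_monom u) (nc_monom v) w = (nc_monom (u @ v) w :: 'f)"
    by (simp add: sum.delta) (auto simp: nc_monom_def splittings_def)
qed

lemma nc_mult_assoc: "nc_mult (nc_mult p q) r = nc_mult p (nc_mult q (r :: 'f::field ncpoly))"
proof
  fix w :: "var list"
  let ?T = "{(a, b, c). a @ b @ c = w}"
  have "nc_mult (nc_mult p q) r w
      = (\<Sum>((u, v), (a, b))\<in>Sigma (splittings w) (\<lambda>(u, v). splittings u). p a * q b * r v)"
    by (simp add: nc_mult_splittings sum_distrib_right sum.Sigma split_def)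
  also have "\<dots> = (\<Sum>(a, b, c)\<in>?T. p a * q b * r c)"
    by (rule sum.reindex_bij_witness[where i = "\<lambda>(a, b, c). ((a @ b, c), (a, b))"
          and j = "\<lambda>((u, v), (a, b)). (a, b, v)"])
       (auto simp: splittings_def)
  also have "\<dots> = (\<Sum>((u, v), (a, b))\<in>Sigma (splittings w) (\<lambda>(u, v). splittings v). p u * q a * r b)"
    by (rule sum.reindex_bij_witness[where j = "\<lambda>(a, b, c). ((a, b @ c), (b, c))"
          and i = "\<lambda>((u, v), (a, b)). (u, a, b)"])
       (auto simp: splittings_def)
  also have "\<dots> = nc_mult p (nc_mult q r) w"
    by (simp add: nc_mult_splittings sum_distrib_left sum.Sigma split_def mult.assoc)
  finally show "nc_mult (nc_mult p q) r w = nc_mult p (nc_mult q r) w" .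
qed

lemma nc_mult_diff_left: "nc_mult (\<lambda>w. p w - q w) r = (\<lambda>w. nc_mult p r w - nc_mult q r w)"
  by (auto simp: nc_mult_def fun_eq_iff left_diff_distrib sum_subtractf)

lemma nc_mult_diff_right: "nc_mult r (\<lambda>w. p w - q w) = (\<lambda>w. nc_mult r p w - nc_mult r q w)"
  by (auto simp: nc_mult_def fun_eq_iff right_diff_distrib sum_subtractf)

lemma nc_br_diff_left: "nc_br (\<lambda>w. p w - q w) r = (\<lambda>w. nc_br p r w - nc_br q r w)"
  by (simp add: nc_br_def nc_mult_diff_left nc_mult_diff_right fun_eq_iff)

lemma nc_br_anticomm: "nc_br q p = (\<lambda>w. (-1) * nc_br p q (w :: var list) :: 'f::field)"
  by (simp add: nc_br_def fun_eq_iff)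

lemma nc_br_jacobi:
  "(\<lambda>w. nc_br (nc_br p a) b w - nc_br (nc_br p b) a w) = nc_br p (nc_br a (b :: 'f::field ncpoly))"
  unfolding nc_br_def
  by (simp only: nc_mult_diff_left nc_mult_diff_right nc_mult_assoc fun_eq_iff) algebra

definition supp :: "'f::field ncpoly \<Rightarrow> var list set" where
  "supp p = {w. p w \<noteq> 0}"

lemma supp_nc_mult: "supp (nc_mult p q) \<subseteq> (\<lambda>(a, b). a @ b) ` (supp p \<times> supp q)"
proof
  fix w assume "w \<in> supp (nc_mult p q)"
  then obtain a b where "(a, b) \<in> splittings w" "p a * q b \<noteq> 0"
    by (auto simp: supp_def nc_mult_splittings elim: sum.not_neutral_contains_not_neutral)
  then show "w \<in> (\<lambda>(a, b). a @ b) ` (supp p \<times> supp q)"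
    by (force simp: splittings_def supp_def)
qed

lemma finite_supp_nc_mult: "finite (supp p) \<Longrightarrow> finite (supp q) \<Longrightarrow> finite (supp (nc_mult p q))"
  by (rule finite_subset[OF supp_nc_mult]) auto

lemma finite_supp_diff: "finite (supp p) \<Longrightarrow> finite (supp q) \<Longrightarrow> finite (supp (\<lambda>w. p w - q w))"
  by (rule finite_subset[of _ "supp p \<union> supp q"]) (auto simp: supp_def)

lemma finite_supp_nc_br: "finite (supp p) \<Longrightarrow> finite (supp q) \<Longrightarrow> finite (supp (nc_br p q))"
  unfolding nc_br_def by (intro finite_supp_diff finite_supp_nc_mult)

lemma finite_supp_nc_var: "finite (supp (nc_var x))"
  by (rule finite_subset[of _ "{[x]}"]) (auto simp: supp_def nc_var_def)

section \<open>Renaming variables\<close>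

definition rename_vars :: "(var \<Rightarrow> var) \<Rightarrow> 'f::field ncpoly \<Rightarrow> 'f ncpoly" where
  "rename_vars \<tau> p u = (\<Sum>w | p w \<noteq> 0 \<and> map \<tau> w = u. p w)"

lemma rename_vars_superset:
  assumes "finite S" "supp p \<subseteq> S"
  shows "rename_vars \<tau> p u = (\<Sum>w | w \<in> S \<and> map \<tau> w = u. p w)"
  unfolding rename_vars_def
  by (rule sum.mono_neutral_left) (use assms in \<open>auto simp: supp_def\<close>)

lemma subst_nc_var_comp:
  assumes "finite (supp p)"
  shows "subst (\<lambda>x. nc_var (\<tau> x)) p = rename_vars \<tau> (p :: 'f::field ncpoly)"
proof
  fix u
  have word_img: "word_img (\<lambda>x. nc_var (\<tau> x)) w = (nc_monom (map \<tau> w) :: 'f ncpoly)" for w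
    by (induction w) (simp_all add: word_img_def nc_one_eq_monom nc_var_eq_monom nc_mult_monom)
  have "subst (\<lambda>x. nc_var (\<tau> x)) p u = (\<Sum>w\<in>supp p. if map \<tau> w = u then p w else 0)"
    unfolding subst_def word_img by (intro sum.cong) (auto simp: nc_monom_def supp_def)
  also have "\<dots> = rename_vars \<tau> p u"
    unfolding sum.inter_filter[OF assms, symmetric] by (simp add: rename_vars_def supp_def)
  finally show "subst (\<lambda>x. nc_var (\<tau> x)) p u = rename_vars \<tau> p u" .
qed

lemma rename_vars_nc_var: "rename_vars \<tau> (nc_var x) = (nc_var (\<tau> x) :: 'f::field ncpoly)"
proof
  fix u
  have "{w. (nc_var x :: 'f ncpoly) w \<noteq> 0 \<and> map \<tau> w = u} = (if u = [\<tau> x] then {[x]} else {})"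
    by (auto simp: nc_var_def)
  then show "rename_vars \<tau> (nc_var x) u = (nc_var (\<tau> x) u :: 'f)"
    by (simp add: rename_vars_def nc_var_def)
qed

lemma rename_vars_diff:
  assumes "finite (supp p)" "finite (supp q)"
  shows "rename_vars \<tau> (\<lambda>w. p w - q w) = (\<lambda>u. rename_vars \<tau> p u - rename_vars \<tau> (q :: 'f::field ncpoly) u)"
proof
  fix u
  let ?S = "supp p \<union> supp q"
  have "rename_vars \<tau> (\<lambda>w. p w - q w) u = (\<Sum>w | w \<in> ?S \<and> map \<tau> w = u. p w - q w)"
    by (rule rename_vars_superset) (use assms in \<open>auto simp: supp_def\<close>)
  also have "\<dots> = rename_vars \<tau> p u - rename_vars \<tau> q u"
    by (simp add: sum_subtractf rename_vars_superset[of ?S] assms)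
  finally show "rename_vars \<tau> (\<lambda>w. p w - q w) u = rename_vars \<tau> p u - rename_vars \<tau> q u" .
qed

lemma rename_vars_nc_mult:
  assumes fp: "finite (supp p)" and fq: "finite (supp q)"
  shows "rename_vars \<tau> (nc_mult p q) = nc_mult (rename_vars \<tau> p) (rename_vars \<tau> (q :: 'f::field ncpoly))"
proof
  fix u
  let ?P = "{(a, b). a \<in> supp p \<and> b \<in> supp q \<and> map \<tau> a @ map \<tau> b = u}"
  let ?S = "(\<lambda>(a, b). a @ b) ` (supp p \<times> supp q)"
  have "rename_vars \<tau> (nc_mult p q) u = (\<Sum>w | w \<in> ?S \<and> map \<tau> w = u. nc_mult p q w)"
    using fp fq supp_nc_mult by (intro rename_vars_superset) auto
  also have "\<dots> = (\<Sum>w | w \<in> ?S \<and> map \<tau> w = u.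
                    \<Sum>(a, b)\<in>splittings w \<inter> supp p \<times> supp q. p a * q b)"
    unfolding nc_mult_splittings
    by (intro sum.cong refl sum.mono_neutral_right) (auto simp: supp_def)
  also have "\<dots> = (\<Sum>(a, b)\<in>?P. p a * q b)"
    by (subst sum.Sigma)
      (auto intro!: sum.reindex_bij_witness[where i = "\<lambda>(a, b). (a @ b, (a, b))" and j = snd]
        simp: splittings_def fp fq simp flip: map_append)
  also have "\<dots> = (\<Sum>s\<in>splittings u.
      \<Sum>(a, b)\<in>{a \<in> supp p. map \<tau> a = fst s} \<times> {b \<in> supp q. map \<tau> b = snd s}. p a * q b)"
    by (subst sum.Sigma, simp_all add: fp fq)
      (rule sum.reindex_bij_witness[where j = "\<lambda>(a, b). ((map \<tau> a, map \<tau> b), (a, b))" and i = snd];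
        auto simp: splittings_def)
  also have "\<dots> = nc_mult (rename_vars \<tau> p) (rename_vars \<tau> q) u"
    by (simp add: nc_mult_splittings rename_vars_def supp_def sum_product sum.cartesian_product split_def)
  finally show "rename_vars \<tau> (nc_mult p q) u = nc_mult (rename_vars \<tau> p) (rename_vars \<tau> q) u" .
qed

lemma rename_vars_nc_br:
  assumes "finite (supp p)" "finite (supp q)"
  shows "rename_vars \<tau> (nc_br p q) = nc_br (rename_vars \<tau> p) (rename_vars \<tau> (q :: 'f::field ncpoly))"
  unfolding nc_br_def
  by (simp add: rename_vars_diff rename_vars_nc_mult finite_supp_nc_mult assms)

lemma graded_endo_nc_var_comp:
  assumes "\<And>x. fst (\<tau> x) = fst x"
  shows "graded_endo n (\<lambda>x. nc_var (\<tau> x) :: 'f::field ncpoly)"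
  unfolding graded_endo_def
proof (intro allI impI conjI)
  fix d i assume "d < n"
  moreover obtain k where "\<tau> (d, i) = (d, k)" using assms[of "(d, i)"] by (cases "\<tau> (d, i)") auto
  ultimately show "nc_var (\<tau> (d, i)) \<in> free_lie n" "homog n d (nc_var (\<tau> (d, i)) :: 'f ncpoly)"
    by (auto intro: free_lie.var simp: homog_def nc_var_def word_deg_def)
qed

section \<open>Left-normed brackets modulo a \<open>T\<close>-ideal\<close>

definition br_list :: "'f::field ncpoly \<Rightarrow> var list \<Rightarrow> 'f ncpoly" where
  "br_list P ys = foldl (\<lambda>p y. nc_br p (nc_var y)) P ys"

lemma br_list_simps [simp]:
  "br_list P [] = P"
  "br_list P (y # ys) = br_list (nc_br P (nc_var y)) ys"
  "br_list P (xs @ ys) = br_list (br_list P xs) ys"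
  by (simp_all add: br_list_def)

lemma finite_supp_br_list: "finite (supp P) \<Longrightarrow> finite (supp (br_list P ys))"
  by (induction ys arbitrary: P) (auto intro: finite_supp_nc_br finite_supp_nc_var)

lemma rename_vars_br_list:
  "finite (supp P) \<Longrightarrow> rename_vars \<tau> (br_list P ys) = br_list (rename_vars \<tau> P) (map \<tau> ys)"
  by (induction ys arbitrary: P)
     (simp_all add: rename_vars_nc_br rename_vars_nc_var finite_supp_nc_br finite_supp_nc_var)

definition cong_mod :: "'f::field ncpoly set \<Rightarrow> 'f ncpoly \<Rightarrow> 'f ncpoly \<Rightarrow> bool" where
  "cong_mod J p q \<longleftrightarrow> (\<lambda>w. p w - q w) \<in> J"

context
  fixes n :: nat and J :: "'f::field ncpoly set"
  assumes J: "T_ideal n J"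
begin

lemma T_ideal_add: "p \<in> J \<Longrightarrow> q \<in> J \<Longrightarrow> (\<lambda>w. p w + q w) \<in> J"
  using J by (simp add: T_ideal_def)

lemma T_ideal_smult: "p \<in> J \<Longrightarrow> (\<lambda>w. c * p w) \<in> J"
  using J by (simp add: T_ideal_def)

lemma T_ideal_br: "p \<in> J \<Longrightarrow> q \<in> free_lie n \<Longrightarrow> nc_br p q \<in> J"
  using J by (simp add: T_ideal_def)

lemma T_ideal_subst: "p \<in> J \<Longrightarrow> graded_endo n \<sigma> \<Longrightarrow> subst \<sigma> p \<in> J"
  using J by (simp add: T_ideal_def)

lemma T_ideal_br_left: "p \<in> J \<Longrightarrow> q \<in> free_lie n \<Longrightarrow> nc_br q p \<in> J"
  by (subst nc_br_anticomm) (intro T_ideal_smult T_ideal_br)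

lemma cong_mod_refl: "cong_mod J p p"
  using J by (simp add: cong_mod_def T_ideal_def)

lemma cong_mod_sym: "cong_mod J p q \<Longrightarrow> cong_mod J q p"
  unfolding cong_mod_def using T_ideal_smult[of "\<lambda>w. p w - q w" "-1"] by simp

lemma cong_mod_trans [trans]: "cong_mod J p q \<Longrightarrow> cong_mod J q r \<Longrightarrow> cong_mod J p r"
  unfolding cong_mod_def using T_ideal_add[of "\<lambda>w. p w - q w" "\<lambda>w. q w - r w"] by simp

lemma cong_mod_mem: "cong_mod J p q \<Longrightarrow> q \<in> J \<Longrightarrow> p \<in> J"
  unfolding cong_mod_def using T_ideal_add[of "\<lambda>w. p w - q w" q] by simp

lemma br_list_mem:
  "P \<in> J \<Longrightarrow> \<forall>y\<in>set ys. fst y < n \<Longrightarrow> br_list P ys \<in> J"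
proof (induction ys arbitrary: P)
  case (Cons y ys)
  then have "nc_var y \<in> free_lie n" by (cases y) (auto intro: free_lie.var)
  with Cons show ?case by (auto intro: T_ideal_br)
qed simp

lemma br_list_cong:
  "cong_mod J P Q \<Longrightarrow> \<forall>y\<in>set ys. fst y < n \<Longrightarrow> cong_mod J (br_list P ys) (br_list Q ys)"
proof (induction ys arbitrary: P Q)
  case (Cons y ys)
  then have "nc_var y \<in> free_lie n" by (cases y) (auto intro: free_lie.var)
  with Cons.prems have "cong_mod J (nc_br P (nc_var y)) (nc_br Q (nc_var y))"
    unfolding cong_mod_def nc_br_diff_left[symmetric] by (intro T_ideal_br) simp_all
  with Cons show ?case by simp
qed simp

context
  assumes n_pos: "0 < n"
    and comm_deg0: "\<And>a b. fst a = 0 \<Longrightarrow> fst b = 0 \<Longrightarrow> nc_br (nc_var a) (nc_var b) \<in> J"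
begin

lemma nc_var_deg0_free_lie: "fst y = 0 \<Longrightarrow> nc_var y \<in> free_lie n"
  using n_pos by (cases y) (auto intro: free_lie.var)

text \<open>By Jacobi, swapping two adjacent degree-0 variables changes the bracket by
  \<open>[P, [a, b]]\<close>, which lies in \<open>J\<close>.\<close>

lemma br_list_swap:
  assumes "P \<in> free_lie n" "fst a = 0" "fst b = 0"
  shows "cong_mod J (br_list P [a, b]) (br_list P [b, a])"
  unfolding cong_mod_def br_list_simps nc_br_jacobi
  using assms comm_deg0 T_ideal_br_left by blast

lemma br_list_move_front:
  "P \<in> free_lie n \<Longrightarrow> \<forall>y\<in>set (x # xs @ ys). fst y = 0 \<Longrightarrow>
    cong_mod J (br_list P (xs @ x # ys)) (br_list P (x # xs @ ys))"
proof (induction xs arbitrary: P)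
  case Nil
  then show ?case by (simp add: cong_mod_refl)
next
  case (Cons c xs)
  have Pc: "nc_br P (nc_var c) \<in> free_lie n"
    using Cons.prems by (auto intro: free_lie.br nc_var_deg0_free_lie)
  have "cong_mod J (br_list P ((c # xs) @ x # ys)) (br_list P ([c, x] @ xs @ ys))"
    using Cons.IH[OF Pc] Cons.prems by simp
  also have "cong_mod J (br_list P ([c, x] @ xs @ ys)) (br_list P ([x, c] @ xs @ ys))"
    unfolding br_list_simps(3)[of P]
    using Cons.prems n_pos by (intro br_list_cong br_list_swap) auto
  finally show ?case by simp
qed

lemma br_list_perm:
  "P \<in> free_lie n \<Longrightarrow> mset xs = mset xs' \<Longrightarrow> \<forall>y\<in>set xs. fst y = 0 \<Longrightarrow>
    cong_mod J (br_list P xs) (br_list P xs')"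
proof (induction xs arbitrary: P xs')
  case Nil
  then show ?case by (simp add: cong_mod_refl)
next
  case (Cons x xs)
  have set_xs': "set xs' = set (x # xs)"
    using Cons.prems(2) by (metis set_mset_mset)
  then have "x \<in> set xs'" by simp
  then obtain l1 l2 where xs': "xs' = l1 @ x # l2"
    by (blast dest: split_list)
  have Px: "nc_br P (nc_var x) \<in> free_lie n"
    using Cons.prems by (auto intro: free_lie.br nc_var_deg0_free_lie)
  have "mset xs = mset (l1 @ l2)"
    using Cons.prems(2) unfolding xs' by simp
  from Cons.IH[OF Px this] have front: "cong_mod J (br_list P (x # xs)) (br_list P (x # l1 @ l2))"
    using Cons.prems(3) by (simp only: br_list_simps(2) list.set ball_simps) blast
  have "\<forall>y\<in>set (x # l1 @ l2). fst y = 0"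
    using Cons.prems(3) set_xs' unfolding xs' by auto
  then have "cong_mod J (br_list P (l1 @ x # l2)) (br_list P (x # l1 @ l2))"
    by (rule br_list_move_front[OF Cons.prems(1)])
  then have "cong_mod J (br_list P (x # l1 @ l2)) (br_list P xs')"
    unfolding xs' by (rule cong_mod_sym)
  with front show ?case by (rule cong_mod_trans)
qed

end
end

section \<open>Degree-0 variables commute in \<open>UT\<^sub>n\<close>\<close>

lemma mprod_diagonal_commute:
  assumes "ut_homog n 0 A" "ut_homog n 0 B" "x < n" "y < n"
  shows "mprod n [A, B] x y = (mprod n [B, A] x y :: 'f::field)"
proof -
  have diag: "mprod n [C, D] x y = (if x = y then C x x * D x x else 0)"
    if "ut_homog n 0 C" "ut_homog n 0 D" for C D :: "nat \<Rightarrow> nat \<Rightarrow> 'f"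
  proof -
    have "mprod n [C, D] x y = (\<Sum>k<n. C x k * D k y)"
      using assms(4) by (simp add: mmult_def if_distrib cong: if_cong)
    also have "\<dots> = (\<Sum>k<n. if k = x then C x x * D x y else 0)"
      using that assms(3) by (intro sum.cong) (auto simp: ut_homog_def)
    finally show ?thesis
      using that assms(3,4) by (auto simp: ut_homog_def)
  qed
  show ?thesis
    using diag[OF assms(1,2)] diag[OF assms(2,1)] by (simp add: mult.commute)
qed

lemma nc_br_deg0_vars_in_UT_ids:
  assumes "0 < n" "fst a = 0" "fst b = 0"
  shows "nc_br (nc_var a) (nc_var b) \<in> (UT_ids n :: 'f::field ncpoly set)"
proof -
  let ?p = "nc_br (nc_var a) (nc_var b) :: 'f ncpoly"
  have p: "?p = (\<lambda>w. nc_monom [a, b] w - nc_monom [b, a] w)"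
    by (simp add: nc_br_def nc_var_eq_monom nc_mult_monom)
  have "ut_eval n \<phi> ?p x y = 0" if "graded_eval_map n \<phi>" "x < n" "y < n" for \<phi> x y
  proof -
    have homog: "ut_homog n 0 (\<phi> a)" "ut_homog n 0 (\<phi> b)"
      using that(1) assms by (metis graded_eval_map_def prod.collapse)+
    have "{w. ?p w \<noteq> 0} \<subseteq> {[a, b], [b, a]}"
      unfolding p nc_monom_def by (intro subsetI) (simp split: if_splits)
    then have "ut_eval n \<phi> ?p x y = (\<Sum>w\<in>{[a, b], [b, a]}. ?p w * mprod n (map \<phi> w) x y)"
      unfolding ut_eval_def by (rule sum.mono_neutral_left[rotated]) simp_all
    also have "\<dots> = 0"
    proof (cases "a = b")
      case True
      then show ?thesis by (simp add: nc_br_def)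
    next
      case False
      then show ?thesis using mprod_diagonal_commute[OF homog that(2,3)] by (simp add: p nc_monom_def)
    qed
    finally show ?thesis .
  qed
  moreover have "?p \<in> free_lie n"
    using assms by (metis free_lie.br free_lie.var prod.collapse)
  ultimately show ?thesis by (simp add: UT_ids_def)
qed

section \<open>Domination of exponent vectors\<close>

definition y_word :: "nat list \<Rightarrow> var list" where
  "y_word as = concat (map (\<lambda>i. replicate (as ! i) (0, Suc i)) [0..<length as])"

lemma lnc_eq_br_list: "lnc z as = br_list (nc_var z) (y_word as)"
  by (simp add: lnc_def br_list_def y_word_def)

lemma fst_y_word: "y \<in> set (y_word as) \<Longrightarrow> fst y = 0"
  by (auto simp: y_word_def)

lemma mset_y_word: "mset (y_word as) = (\<Sum>i<length as. replicate_mset (as ! i) (0, Suc i))"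
  by (simp add: y_word_def mset_concat interv_sum_list_conv_sum_set_nat comp_def lessThan_atLeast0)

lemma sum_subseteq_mset_mono:
  "(\<And>i. i \<in> A \<Longrightarrow> f i \<subseteq># g i) \<Longrightarrow> (\<Sum>i\<in>A. f i) \<subseteq># (\<Sum>i\<in>A. g i)"
  by (induction A rule: infinite_finite_induct) (auto intro: mset_subset_eq_mono_add)

lemma sum_subseteq_mset_subset:
  assumes "finite B" "A \<subseteq> B"
  shows "(\<Sum>i\<in>A. f i) \<subseteq># (\<Sum>i\<in>B. f i :: 'a multiset)"
  using sum.subset_diff[OF assms(2,1), of f] by simp

lemma vle_renaming:
  assumes "vle as bs"
  obtains \<tau> where "\<And>x. fst (\<tau> x) = fst x" "\<And>x. fst x \<noteq> 0 \<Longrightarrow> \<tau> x = x"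
    and "mset (map \<tau> (y_word as)) \<subseteq># mset (y_word bs)"
proof -
  define m where "m = length as"
  obtain \<phi> where mono: "strict_mono_on {0..<m} \<phi>"
    and \<phi>: "\<And>i. i < m \<Longrightarrow> \<phi> i < length bs \<and> as ! i \<le> bs ! \<phi> i"
    using assms unfolding vle_def m_def by blast
  define \<tau> where "\<tau> x = (if fst x = 0 \<and> 0 < snd x \<and> snd x \<le> m then (0, Suc (\<phi> (snd x - 1))) else x)"
    for x :: var
  let ?Y = "\<lambda>c j. replicate_mset c (0::nat, Suc j)"
  have "map \<tau> (y_word as) = concat (map (\<lambda>i. replicate (as ! i) (0, Suc (\<phi> i))) [0..<m])"
    unfolding y_word_def map_concat map_map
    by (intro arg_cong[where f = concat] map_cong) (auto simp: m_def \<tau>_def)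
  then have "mset (map \<tau> (y_word as)) = (\<Sum>i<m. ?Y (as ! i) (\<phi> i))"
    by (simp add: mset_concat interv_sum_list_conv_sum_set_nat comp_def lessThan_atLeast0)
  also have "\<dots> \<subseteq># (\<Sum>i<m. ?Y (bs ! \<phi> i) (\<phi> i))"
    using \<phi> by (intro sum_subseteq_mset_mono) (simp add: replicate_mset_msubseteq_iff)
  also have "\<dots> = (\<Sum>j\<in>\<phi> ` {..<m}. ?Y (bs ! j) j)"
    using strict_mono_on_imp_inj_on[OF mono] by (simp add: sum.reindex atLeast0LessThan)
  also have "\<dots> \<subseteq># (\<Sum>j<length bs. ?Y (bs ! j) j)"
    using \<phi> by (intro sum_subseteq_mset_subset) auto
  also have "\<dots> = mset (y_word bs)"
    by (simp add: mset_y_word)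
  finally have "mset (map \<tau> (y_word as)) \<subseteq># mset (y_word bs)" .
  then show thesis
    by (rule that[rotated 2]) (auto simp: \<tau>_def)
qed

lemma lnc_mem_T_ideal_if_vle:
  fixes J :: "'f::field ncpoly set"
  assumes J: "T_ideal n J" and "UT_ids n \<subseteq> J"
    and g: "0 < g" "g < n" and "vle as bs" and as: "lnc (g, zi) as \<in> J"
  shows "lnc (g, zi) bs \<in> J"
proof -
  obtain \<tau> where \<tau>: "\<And>x. fst (\<tau> x) = fst x" "\<And>x. fst x \<noteq> 0 \<Longrightarrow> \<tau> x = x"
    and sub: "mset (map \<tau> (y_word as)) \<subseteq># mset (y_word bs)"
    using vle_renaming[OF \<open>vle as bs\<close>] by blast
  have comm: "nc_br (nc_var a) (nc_var b) \<in> J" if "fst a = 0" "fst b = 0" for a b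
    using nc_br_deg0_vars_in_UT_ids[of n a b] that g \<open>UT_ids n \<subseteq> J\<close> by auto
  let ?z = "nc_var (g, zi) :: 'f ncpoly"
  have z: "?z \<in> free_lie n" using g by (intro free_lie.var)
  have "subst (\<lambda>x. nc_var (\<tau> x)) (lnc (g, zi) as) \<in> J"
    using \<tau>(1) by (intro T_ideal_subst[OF J as] graded_endo_nc_var_comp)
  then have renamed: "br_list ?z (map \<tau> (y_word as)) \<in> J"
    using \<tau>(2)[of "(g, zi)"] g
    by (simp add: lnc_eq_br_list subst_nc_var_comp finite_supp_br_list finite_supp_nc_var
        rename_vars_br_list rename_vars_nc_var)
  obtain rest where rest: "mset (y_word bs) = mset (map \<tau> (y_word as) @ rest)"
    using sub by (metis ex_mset mset_append subset_mset.add_diff_inverse)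
  then have "set rest \<subseteq> set (y_word bs)"
    by (metis mset_eq_setD set_append sup_ge2)
  then have "br_list (br_list ?z (map \<tau> (y_word as))) rest \<in> J"
    using g by (intro br_list_mem[OF J renamed]) (auto dest!: fst_y_word)
  moreover have "cong_mod J (br_list ?z (y_word bs)) (br_list ?z (map \<tau> (y_word as) @ rest))"
    using g comm by (intro br_list_perm[OF J _ _ z rest]) (auto dest: fst_y_word)
  ultimately show ?thesis
    unfolding lnc_eq_br_list by (auto intro: cong_mod_mem[OF J])
qed

section \<open>Well-quasi-orders and Higman's lemma\<close>

definition good :: "('a \<Rightarrow> 'a \<Rightarrow> bool) \<Rightarrow> (nat \<Rightarrow> 'a) \<Rightarrow> bool" where
  "good P f \<longleftrightarrow> (\<exists>i j. i < j \<and> P (f i) (f j))"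

text \<open>Ramsey's theorem for pairs, colouring \<open>{i < j}\<close> by whether \<open>P (f i) (f j)\<close>: an infinite
  homogeneous set must have the colour \<open>P\<close>, since it contains no bad subsequence.\<close>

lemma good_imp_chain:
  fixes s :: "nat \<Rightarrow> 'a"
  assumes good: "\<And>f. good P f"
  shows "\<exists>r. strict_mono r \<and> (\<forall>k. P (s (r k)) (s (r (Suc k))))"
proof -
  define c :: "nat set \<Rightarrow> nat" where "c X = (if P (s (Min X)) (s (Max X)) then 0 else 1)" for X
  have "\<exists>Y t. Y \<subseteq> UNIV \<and> infinite Y \<and> t < 2 \<and> (\<forall>x\<in>Y. \<forall>y\<in>Y. x \<noteq> y \<longrightarrow> c {x, y} = t)"
    by (rule Ramsey2) (simp_all add: c_def)
  then obtain Y t where Y: "infinite Y"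
    and hom: "\<forall>x\<in>Y. \<forall>y\<in>Y. x \<noteq> y \<longrightarrow> c {x, y} = t"
    by blast
  define r where "r = enumerate Y"
  have r_less: "i < j \<Longrightarrow> r i < r j" for i j using enumerate_mono[OF _ Y] by (simp add: r_def)
  have r_in: "r i \<in> Y" for i using enumerate_in_set[OF Y] by (simp add: r_def)
  have c_r: "i < j \<Longrightarrow> c {r i, r j} = (if P (s (r i)) (s (r j)) then 0 else 1)" for i j
    using r_less[of i j] by (simp add: c_def min_def max_def)
  have c_r_t: "i < j \<Longrightarrow> c {r i, r j} = t" for i j
    using hom r_in r_less[of i j] by (metis less_irrefl)
  obtain i j where "i < j" "P (s (r i)) (s (r j))"
    using good[of "\<lambda>k. s (r k)"] unfolding good_def by blast
  then have "t = 0" using c_r c_r_t by auto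
  then have "P (s (r k)) (s (r (Suc k)))" for k
    using c_r[of k "Suc k"] c_r_t[of k "Suc k"] by (simp split: if_splits)
  moreover have "strict_mono r" by (rule strict_monoI) (rule r_less)
  ultimately show ?thesis by blast
qed

lemma good_imp_finite_basis:
  assumes good: "\<And>f. good P f"
  shows "\<exists>B. finite B \<and> B \<subseteq> X \<and> (\<forall>b\<in>X. \<exists>a\<in>B. P a b)"
proof (rule ccontr)
  assume no_basis: "\<not> ?thesis"
  have "\<exists>b. b \<in> X \<and> (\<forall>a\<in>B. \<not> P a b)" if "finite B" "B \<subseteq> X" for B
    using no_basis that by metis
  then obtain pick where pick: "\<And>B. finite B \<Longrightarrow> B \<subseteq> X \<Longrightarrow> pick B \<in> X \<and> (\<forall>a\<in>B. \<not> P a (pick B))"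
    by metis
  define pre where "pre = rec_nat [] (\<lambda>_ L. L @ [pick (set L)])"
  define s where "s k = pick (set (pre k))" for k
  have pre: "pre k = map s [0..<k]" for k
    by (induction k) (simp_all add: pre_def s_def)
  have s_in: "s k \<in> X" for k
  proof (induction k rule: less_induct)
    case (less k)
    then have "set (pre k) \<subseteq> X" by (auto simp: pre)
    then show ?case using pick[of "set (pre k)"] by (simp add: s_def)
  qed
  have "\<not> P (s i) (s j)" if "i < j" for i j
  proof -
    have "set (pre j) \<subseteq> X" "s i \<in> set (pre j)" using s_in that by (auto simp: pre)
    then show ?thesis using pick[of "set (pre j)"] by (simp add: s_def[of j])
  qed
  then show False using good[of s] by (auto simp: good_def)
qed

abbreviation bad_emb :: "(nat \<Rightarrow> 'a::wellorder list) \<Rightarrow> bool" where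
  "bad_emb f \<equiv> \<not> good (list_emb (\<le>)) f"

definition min_bad_ext :: "nat \<Rightarrow> (nat \<Rightarrow> 'a::wellorder list) \<Rightarrow> nat \<Rightarrow> 'a list" where
  "min_bad_ext k f = (ARG_MIN (\<lambda>g. length (g k)) g. bad_emb g \<and> (\<forall>i<k. g i = f i))"

lemma min_bad_ext:
  assumes "bad_emb h" "\<forall>i<k. h i = f i"
  shows "bad_emb (min_bad_ext k f)" "\<forall>i<k. min_bad_ext k f i = f i"
    and "\<And>h. bad_emb h \<Longrightarrow> \<forall>i<k. h i = f i \<Longrightarrow> length (min_bad_ext k f k) \<le> length (h k)"
  using arg_min_nat_lemma[of "\<lambda>g. bad_emb g \<and> (\<forall>i<k. g i = f i)" h "\<lambda>g. length (g k)"] assms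
  unfolding min_bad_ext_def by blast+

text \<open>The diagonal \<open>k \<mapsto> min_bad_approx k k\<close> is Nash-Williams' minimal bad sequence.\<close>

primrec min_bad_approx :: "nat \<Rightarrow> nat \<Rightarrow> 'a::wellorder list" where
  "min_bad_approx 0 = min_bad_ext 0 (\<lambda>_. [])"
| "min_bad_approx (Suc k) = min_bad_ext (Suc k) (min_bad_approx k)"

lemma min_bad_approx:
  fixes f h :: "nat \<Rightarrow> 'a::wellorder list"
  assumes "bad_emb f"
  shows min_bad_approx_bad: "bad_emb (min_bad_approx k :: nat \<Rightarrow> 'a list)"
    and min_bad_approx_Suc: "i \<le> k \<Longrightarrow> min_bad_approx (Suc k) i = (min_bad_approx k i :: 'a list)"
    and min_bad_approx_min: "bad_emb h \<Longrightarrow> \<forall>i<k. h i = min_bad_approx k i \<Longrightarrow>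
      length (min_bad_approx k k :: 'a list) \<le> length (h k)"
proof -
  show bad: "bad_emb (min_bad_approx k :: nat \<Rightarrow> 'a list)" for k
  proof (induction k)
    case 0
    show ?case using min_bad_ext(1)[OF assms, of 0] by simp
  next
    case (Suc k)
    show ?case using min_bad_ext(1)[OF Suc.IH, of "Suc k"] by simp
  qed
  show agree: "min_bad_approx (Suc k) i = (min_bad_approx k i :: 'a list)" if "i \<le> k" for i k
    using min_bad_ext(2)[OF bad[of k], of "Suc k" "min_bad_approx k"] that by simp
  show "length (min_bad_approx k k :: 'a list) \<le> length (h k)"
    if "bad_emb h" "\<forall>i<k. h i = min_bad_approx k i"
  proof (cases k)
    case 0
    then show ?thesis using min_bad_ext(3)[OF assms, of 0 _ h] that by simp
  next
    case (Suc k')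
    then show ?thesis using min_bad_ext(3)[OF bad[of k'], of k] that agree[of _ k'] by simp
  qed
qed

lemma minimal_bad_seq:
  fixes f :: "nat \<Rightarrow> 'a::wellorder list"
  assumes "bad_emb f"
  shows "\<exists>m :: nat \<Rightarrow> 'a list. bad_emb m \<and>
    (\<forall>h k. bad_emb h \<longrightarrow> (\<forall>i<k. h i = m i) \<longrightarrow> length (m k) \<le> length (h k))"
proof (intro exI conjI allI impI)
  define m :: "nat \<Rightarrow> 'a list" where "m k = min_bad_approx k k" for k
  have agree: "min_bad_approx k i = m i" if "i \<le> k" for i k
    using that
  proof (induction k)
    case (Suc k)
    then show ?case
      using min_bad_approx_Suc[OF assms, of i k] by (cases "i = Suc k") (simp_all add: m_def)
  qed (simp add: m_def)
  show "bad_emb m"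
  proof
    assume "good (list_emb (\<le>)) m"
    then obtain i j where "i < j" "list_emb (\<le>) (m i) (m j)" by (auto simp: good_def)
    moreover have "min_bad_approx j i = m i" "min_bad_approx j j = m j"
      using \<open>i < j\<close> by (simp_all add: agree)
    ultimately have "good (list_emb (\<le>)) (min_bad_approx j :: nat \<Rightarrow> 'a list)"
      unfolding good_def by metis
    then show False using min_bad_approx_bad[OF assms] by blast
  qed
  fix h :: "nat \<Rightarrow> 'a list" and k
  assume "bad_emb h" "\<forall>i<k. h i = m i"
  moreover from this(2) have "\<forall>i<k. h i = min_bad_approx k i" by (simp add: agree)
  ultimately show "length (m k) \<le> length (h k)"
    using min_bad_approx_min[OF assms] by (simp add: m_def)
qed

lemma good_le_wellorder: "good (\<le>) (f :: nat \<Rightarrow> 'a::wellorder)"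
proof -
  obtain i where "f i = (LEAST v. v \<in> range f)" by (metis LeastI rangeE rangeI)
  then have "f i \<le> f (Suc i)" by (simp add: Least_le)
  then show ?thesis unfolding good_def by (intro exI[of _ i] exI[of _ "Suc i"]) simp
qed

lemma bad_emb_splice_tails:
  fixes m t :: "nat \<Rightarrow> 'a::wellorder list"
  assumes bad: "bad_emb m" and m: "\<And>k. m k = x k # t k"
    and r: "strict_mono r" and x: "\<And>a b. a \<le> b \<Longrightarrow> x (r a) \<le> x (r b)"
  shows "bad_emb (\<lambda>i. if i < r 0 then m i else t (r (i - r 0)))" (is "bad_emb ?g")
proof
  assume "good (list_emb (\<le>)) ?g"
  then obtain i j where ij: "i < j" and emb: "list_emb (\<le>) (?g i) (?g j)" by (auto simp: good_def)
  have no_emb: "\<not> list_emb (\<le>) (m a) (m b)" if "a < b" for a b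
    using bad that by (auto simp: good_def)
  have r0: "r 0 \<le> r a" for a using r by (simp add: strict_mono_less_eq)
  consider "j < r 0" | "i < r 0" "r 0 \<le> j" | "r 0 \<le> i" using ij by linarith
  then show False
  proof cases
    case 1
    then show False using emb ij no_emb by simp
  next
    case 2
    then have "list_emb (\<le>) (m i) (m (r (j - r 0)))" using emb m by (simp add: list_emb_Cons)
    moreover have "i < r (j - r 0)" using 2 r0[of "j - r 0"] by simp
    ultimately show False using no_emb by blast
  next
    case 3
    then have "list_emb (\<le>) (x (r (i - r 0)) # t (r (i - r 0))) (x (r (j - r 0)) # t (r (j - r 0)))"
      using emb ij x[of "i - r 0" "j - r 0"] by (intro list_emb_Cons2) simp_all
    moreover have "r (i - r 0) < r (j - r 0)" using 3 ij r by (simp add: strict_mono_less)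
    ultimately show False using no_emb m by metis
  qed
qed

theorem higman: "good (list_emb (\<le>)) (f :: nat \<Rightarrow> 'a::wellorder list)"
proof (rule ccontr)
  assume "bad_emb f"
  then obtain m :: "nat \<Rightarrow> 'a list" where bad: "bad_emb m"
    and min: "\<And>h k. bad_emb h \<Longrightarrow> \<forall>i<k. h i = m i \<Longrightarrow> length (m k) \<le> length (h k)"
    using minimal_bad_seq[OF \<open>bad_emb f\<close>] by blast
  have nonempty: "m k \<noteq> []" for k
    using bad unfolding good_def by (metis lessI list_emb_Nil)
  then have m: "m k = hd (m k) # tl (m k)" for k by simp
  obtain r where r: "strict_mono r" and x: "\<forall>k. hd (m (r k)) \<le> hd (m (r (Suc k)))"
    using good_imp_chain[OF good_le_wellorder, of "\<lambda>k. hd (m k)"] by auto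
  have "hd (m (r a)) \<le> hd (m (r b))" if "a \<le> b" for a b
    using lift_Suc_mono_le[of "\<lambda>k. hd (m (r k))"] x that by blast
  then have "bad_emb (\<lambda>i. if i < r 0 then m i else tl (m (r (i - r 0))))"
    by (rule bad_emb_splice_tails[OF bad m r])
  from min[OF this, of "r 0"] show False
    using nonempty[of "r 0"] by (cases "m (r 0)") simp_all
qed

lemma list_emb_imp_vle: "list_emb (\<le>) as bs \<Longrightarrow> vle as bs"
proof (induction rule: list_emb.induct)
  case (list_emb_Nil ys)
  then show ?case by (auto simp: vle_def strict_mono_on_def)
next
  case (list_emb_Cons xs ys y)
  then obtain \<phi> where mono: "strict_mono_on {0..<length xs} \<phi>"
    and \<phi>: "\<forall>i<length xs. \<phi> i < length ys \<and> xs ! i \<le> ys ! \<phi> i"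
    unfolding vle_def by blast
  have "strict_mono_on {0..<length xs} (\<lambda>i. Suc (\<phi> i))"
    using mono by (auto simp: strict_mono_on_def)
  with \<phi> show ?case unfolding vle_def by (intro exI[of _ "\<lambda>i. Suc (\<phi> i)"]) simp
next
  case (list_emb_Cons2 x y xs ys)
  then obtain \<phi> where mono: "strict_mono_on {0..<length xs} \<phi>"
    and \<phi>: "\<forall>i<length xs. \<phi> i < length ys \<and> xs ! i \<le> ys ! \<phi> i"
    unfolding vle_def by blast
  define \<psi> where "\<psi> i = (case i of 0 \<Rightarrow> 0 | Suc k \<Rightarrow> Suc (\<phi> k))" for i
  have "strict_mono_on {0..<length (x # xs)} \<psi>"
    using mono by (auto simp: strict_mono_on_def \<psi>_def split: nat.split)
  moreover have "\<forall>i<length (x # xs). \<psi> i < length (y # ys) \<and> (x # xs) ! i \<le> (y # ys) ! \<psi> i"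
    using \<phi> list_emb_Cons2.hyps by (auto simp: \<psi>_def nth_Cons split: nat.split)
  ultimately show ?case unfolding vle_def by blast
qed

lemma vle_chain:
  fixes s :: "nat \<Rightarrow> nat list"
  shows "\<exists>r. strict_mono r \<and> (\<forall>k. vle (s (r k)) (s (r (Suc k))))"
  using good_imp_chain[OF higman, of s] list_emb_imp_vle by blast

lemma T_gen_mono: "S \<subseteq> S' \<Longrightarrow> T_gen n S \<subseteq> T_gen n S'"
  unfolding T_gen_def by blast

lemma lnc_vle_mem_T_gen:
  assumes "0 < g" "g < n" "vle as bs"
  shows "(lnc (g, zi) bs :: 'f::field ncpoly) \<in> T_gen n ({lnc (g, zi) as} \<union> UT_ids n)"
  unfolding T_gen_def using lnc_mem_T_ideal_if_vle[OF _ _ assms] by blast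

lemma B_set_finitely_generated:
  fixes J :: "'f::field ncpoly set"
  assumes "0 < g" "g < n" and "T_ideal n J" "UT_ids n \<subseteq> J"
  shows "\<exists>A'. finite A' \<and> A' \<subseteq> J \<inter> B_set (g, zi) \<and>
    T_gen n ((J \<inter> B_set (g, zi)) \<union> UT_ids n) = T_gen n (A' \<union> UT_ids n)"
proof -
  define X where "X = {as. valid_exp as \<and> lnc (g, zi) as \<in> J}"
  obtain F where F: "finite F" "F \<subseteq> X" and basis: "\<forall>bs\<in>X. \<exists>as\<in>F. list_emb (\<le>) as bs"
    using good_imp_finite_basis[OF higman] by blast
  define A' where "A' = (\<lambda>as. lnc (g, zi) as :: 'f ncpoly) ` F"
  have A': "A' \<subseteq> J \<inter> B_set (g, zi)"
    using F(2) by (auto simp: A'_def X_def B_set_def)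
  have "J \<inter> B_set (g, zi) \<subseteq> K" if K: "T_ideal n K" "A' \<union> UT_ids n \<subseteq> K" for K
  proof
    fix h assume "h \<in> J \<inter> B_set (g, zi)"
    then obtain bs where h: "h = lnc (g, zi) bs" and "bs \<in> X" by (auto simp: B_set_def X_def)
    then obtain as where "as \<in> F" "list_emb (\<le>) as bs" using basis by blast
    moreover from \<open>as \<in> F\<close> have "lnc (g, zi) as \<in> K" using K(2) by (auto simp: A'_def)
    ultimately show "h \<in> K"
      unfolding h using K assms(1,2) by (auto intro: lnc_mem_T_ideal_if_vle list_emb_imp_vle)
  qed
  then have "T_gen n ((J \<inter> B_set (g, zi)) \<union> UT_ids n) \<subseteq> T_gen n (A' \<union> UT_ids n)"
    unfolding T_gen_def by blast
  moreover have "T_gen n (A' \<union> UT_ids n) \<subseteq> T_gen n ((J \<inter> B_set (g, zi)) \<union> UT_ids n)"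
    using A' by (intro T_gen_mono) blast
  ultimately show ?thesis using F(1) A' unfolding A'_def by blast
qed

theorem mainTheorem11:
  fixes n g zi :: nat
  assumes inf: "infinite (UNIV :: 'f::field set)"
    and n2: "2 \<le> n" and g0: "0 < g" and gn: "g < n"
  shows
    "(\<forall>as bs. valid_exp as \<longrightarrow> valid_exp bs \<longrightarrow> vle as bs \<longrightarrow>
        (lnc (g, zi) bs :: 'f ncpoly) \<in> T_gen n ({lnc (g, zi) as} \<union> UT_ids n))
   \<and> (\<forall>s :: nat \<Rightarrow> nat list. (\<forall>k. valid_exp (s k)) \<longrightarrow>
        (\<exists>r. strict_mono r \<and> (\<forall>k. vle (s (r k)) (s (r (Suc k))))))
   \<and> (\<forall>J :: 'f ncpoly set. T_ideal n J \<longrightarrow> UT_ids n \<subseteq> J \<longrightarrow>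
        (\<exists>A'. finite A' \<and> A' \<subseteq> J \<inter> B_set (g, zi) \<and>
           T_gen n ((J \<inter> B_set (g, zi)) \<union> UT_ids n) = T_gen n (A' \<union> UT_ids n)))"
proof (intro conjI allI impI)
  fix as bs :: "nat list"
  assume "vle as bs"
  then show "(lnc (g, zi) bs :: 'f ncpoly) \<in> T_gen n ({lnc (g, zi) as} \<union> UT_ids n)"
    by (rule lnc_vle_mem_T_gen[OF g0 gn])
next
  fix s :: "nat \<Rightarrow> nat list"
  show "\<exists>r. strict_mono r \<and> (\<forall>k. vle (s (r k)) (s (r (Suc k))))"
    by (rule vle_chain)
next
  fix J :: "'f ncpoly set"
  assume "T_ideal n J" "UT_ids n \<subseteq> J"
  then show "\<exists>A'. finite A' \<and> A' \<subseteq> J \<inter> B_set (g, zi) \<and>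
      T_gen n ((J \<inter> B_set (g, zi)) \<union> UT_ids n) = T_gen n (A' \<union> UT_ids n)"
    by (rule B_set_finitely_generated[OF g0 gn])
qed

end
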